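(* Consider the cache-aided combination network described in the context with user cache size $M$ and relay cache size $N$ satisfying $0<M+rN\le D$. Then every achievable rate pair $(R_1,R_2)$ satisfies $$R_1\ge \max\left(\max_{l\in\{r,\dots,h\}}\ \max_{s\in\{1,\dots,\min(D,\binom{l}{r})\}}\frac1l\Big(s-\frac{sM+lN}{\lfloor D/s\rfloor}\Big),\ \max_{x\in\{1,\dots,\min(D,K)\}}\frac1u\Big(x-\frac{xM+uN}{\lfloor D/x\rfloor}\Big)\right),$$ where $u=\min(x+r-1,h)$, and $$R_2\ge \frac1r\Big(1-\frac MD\Big).$$
   Context: Combination network: a server holds $D$ independent files $W_1,\dots,W_D$, each uniformly distributed over $F$ bits. There are $h$ relay nodes $\Gamma_1,\dots,\Gamma_h$ and $K=\binom{h}{r}$ end users ($r<h$); each end user is connected to a distinct set of $r$ relays (one user for each $r$-subset), so each relay is connected to $\hat K=\binom{h-1}{r-1}$ users. The server is connected to every relay; all links are noiseless unicast links. Assume $K\le D$. Each end user has a cache of $MF$ bits, each relay a cache of $NF$ bits. Placement phase (before demands): relay $j$ stores $V_j$, user $k$ stores $Z_k$, functions of the files with $H(V_j)\le NF$, $H(Z_k)\le MF$. Delivery phase: user $k$ requests $W_{d_k}$ for an arbitrary demand vector $\mathbf d\in\{1,\dots,D\}^K$; the server sends relay $\Gamma_i$ a signal $X_{i,\mathbf d}$ of $R_1F$ bits; relay $\Gamma_i$ sends each connected user $k$ a signal $Y_{i,\mathbf d,k}$ of $R_2F$ bits, a function of $X_{i,\mathbf d},V_i,\mathbf d$; user $k$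 decodes from $Z_k$, $\mathbf d$ and its $r$ received signals. $(R_1,R_2)$ (normalized by $F$) is achievable if for every $\epsilon>0$ and all sufficiently large $F$ there is such a scheme with $\max_{\mathbf d,k}P(\hat W_{d_k}\ne W_{d_k})<\epsilon$. *)

theory Defs
  imports Complex_Main "HOL-Library.FuncSet"
begin

text \<open>A realization of the library: files indexed 1..D, each an F-bit string.
  Files are independent and uniform, i.e. the library is uniform over this finite set.\<close>
definition file_tuples :: "nat \<Rightarrow> nat \<Rightarrow> (nat \<Rightarrow> bool list) set" where
  "file_tuples D F = PiE {1..D} (\<lambda>_. {xs. length xs = F})"

text \<open>End users: one per r-subset of the relays {1..h}; a user is identified with its relay set.\<close>
definition users :: "nat \<Rightarrow> nat \<Rightarrow> nat set set" where
  "users h r = {A. A \<subseteq> {1..h} \<and> card A = r}"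

definition demands :: "nat \<Rightarrow> nat \<Rightarrow> nat \<Rightarrow> (nat set \<Rightarrow> nat) set" where
  "demands h r D = PiE (users h r) (\<lambda>_. {1..D})"

definition unif_prob :: "'a set \<Rightarrow> ('a \<Rightarrow> 'b) \<Rightarrow> 'b \<Rightarrow> real" where
  "unif_prob S f v = real (card {w \<in> S. f w = v}) / real (card S)"

definition unif_entropy :: "'a set \<Rightarrow> ('a \<Rightarrow> 'b) \<Rightarrow> real" where
  "unif_entropy S f = (\<Sum>v \<in> f ` S. - unif_prob S f v * log 2 (unif_prob S f v))"

text \<open>V j w  : content of relay j's cache;  Z k w : content of user k's cache;
  X i d w : server-to-relay-i signal under demand d;
  Y i d k x v : relay i's signal to user k, a function of the received x, its cache v and d;
  Dec k d z y : user k's estimate from its cache z, d and its received signals (y i, i \<in> k).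
  err_bound: for every demand and user the error probability is < eps.\<close>
definition scheme_ok ::
  "nat \<Rightarrow> nat \<Rightarrow> nat \<Rightarrow> real \<Rightarrow> real \<Rightarrow> real \<Rightarrow> real \<Rightarrow> real \<Rightarrow> nat
   \<Rightarrow> (nat \<Rightarrow> (nat \<Rightarrow> bool list) \<Rightarrow> nat)
   \<Rightarrow> (nat set \<Rightarrow> (nat \<Rightarrow> bool list) \<Rightarrow> nat)
   \<Rightarrow> (nat \<Rightarrow> (nat set \<Rightarrow> nat) \<Rightarrow> (nat \<Rightarrow> bool list) \<Rightarrow> nat)
   \<Rightarrow> (nat \<Rightarrow> (nat set \<Rightarrow> nat) \<Rightarrow> nat set \<Rightarrow> nat \<Rightarrow> nat \<Rightarrow> nat)
   \<Rightarrow> (nat set \<Rightarrow> (nat set \<Rightarrow> nat) \<Rightarrow> nat \<Rightarrow> (nat \<Rightarrow> nat) \<Rightarrow> bool list) \<Rightarrow> bool" where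
  "scheme_ok h r D M N R1 R2 eps F V Z X Y Dec \<longleftrightarrow>
     (let W = file_tuples D F in
      (\<forall>j \<in> {1..h}. unif_entropy W (V j) \<le> N * real F) \<and>
      (\<forall>k \<in> users h r. unif_entropy W (Z k) \<le> M * real F) \<and>
      (\<forall>d \<in> demands h r D. \<forall>i \<in> {1..h}.
          real (card (X i d ` W)) \<le> 2 powr (R1 * real F)) \<and>
      (\<forall>d \<in> demands h r D. \<forall>i \<in> {1..h}. \<forall>k \<in> users h r. i \<in> k \<longrightarrow>
          real (card ((\<lambda>w. Y i d k (X i d w) (V i w)) ` W)) \<le> 2 powr (R2 * real F)) \<and>
      (\<forall>d \<in> demands h r D. \<forall>k \<in> users h r.
          real (card {w \<in> W. Dec k d (Z k w)
                   (\<lambda>i. if i \<in> k then Y i d k (X i d w) (V i w) else 0) \<noteq> w (d k)})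
            / real (card W) < eps))"

definition achievable :: "nat \<Rightarrow> nat \<Rightarrow> nat \<Rightarrow> real \<Rightarrow> real \<Rightarrow> real \<Rightarrow> real \<Rightarrow> bool" where
  "achievable h r D M N R1 R2 \<longleftrightarrow>
     (\<forall>eps > 0. \<exists>F0. \<forall>F \<ge> F0.
        \<exists>V Z X Y Dec. scheme_ok h r D M N R1 R2 eps F V Z X Y Dec)"

end

theory Submission
  imports Defs
begin

text \<open>All bounds are cut-set bounds. Take s users whose relay sets lie inside a set of l relays,
  and m = D div s demand vectors under which these users jointly request s m distinct files.
  These files are then decoded from the s user caches, the l relay caches and the l m server
  signals to those relays, of entropies at most M F, N F and R1 F bits each. Counting the
  s m F bits of the files against this, with Fano's inequality for the decoding errors, and
  letting F grow gives s m \<le> s M + l N + l m R1. Users inside l relays exist for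
  s \<le> (l choose r), and x users fit inside min (x + r - 1) h relays. For R2, a single user
  decodes all D files over D demands from its cache and the r D signals of its relays, so
  D \<le> M + r D R2.\<close>

lemma sum_comp_by_fibres:
  assumes "finite S"
  shows "(\<Sum>w\<in>S. g (f w)) = (\<Sum>v\<in>f ` S. real (card {w\<in>S. f w = v}) * g v)"
proof -
  have "(\<Sum>w\<in>S. g (f w)) = (\<Sum>v\<in>f ` S. \<Sum>w\<in>{x\<in>S. f x = v}. g (f w))"
    using sum.image_gen[OF assms, of "\<lambda>w. g (f w)" f] .
  also have "\<dots> = (\<Sum>v\<in>f ` S. \<Sum>w\<in>{x\<in>S. f x = v}. g v)"
    by (rule sum.cong) auto
  finally show ?thesis by simp
qed

lemma card_fibre_pos:
  assumes "finite S" "w \<in> S"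
  shows "card {x\<in>S. f x = f w} > 0"
  using assms by (subst card_gt_0_iff) auto

lemma sum_card_fibres:
  assumes "finite S"
  shows "(\<Sum>v\<in>f ` S. real (card {w\<in>S. f w = v})) = card S"
  using sum_comp_by_fibres[OF assms, of "\<lambda>_. 1" f] by simp

lemma sum_inverse_card_fibres:
  assumes "finite S"
  shows "(\<Sum>w\<in>S. 1 / real (card {x\<in>S. f x = f w})) = card (f ` S)"
proof -
  have "(\<Sum>w\<in>S. 1 / real (card {x\<in>S. f x = f w})) =
        (\<Sum>v\<in>f ` S. real (card {w\<in>S. f w = v}) * (1 / real (card {x\<in>S. f x = v})))"
    by (rule sum_comp_by_fibres[OF assms])
  also have "\<dots> = (\<Sum>v\<in>f ` S. 1)"
    by (rule sum.cong) (use card_fibre_pos[OF assms] in auto)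
  finally show ?thesis by simp
qed

lemma unif_prob_pos:
  assumes "finite S" "w \<in> S"
  shows "unif_prob S f (f w) > 0"
proof -
  have "card S > 0" using assms card_gt_0_iff by blast
  then show ?thesis using card_fibre_pos[OF assms, of f] unfolding unif_prob_def by simp
qed

lemma neg_log_unif_prob:
  assumes "finite S" "w \<in> S"
  shows "- log 2 (unif_prob S f (f w)) = log 2 (card S / card {x\<in>S. f x = f w})"
proof -
  have "card S > 0" using assms card_gt_0_iff by blast
  then show ?thesis using card_fibre_pos[OF assms, of f] unfolding unif_prob_def
    by (simp add: log_divide)
qed

lemma unif_entropy_eq_mean:
  assumes "finite S"
  shows "unif_entropy S f = (\<Sum>w\<in>S. - log 2 (unif_prob S f (f w))) / card S"
proof (cases "S = {}")
  case True
  then show ?thesis by (simp add: unif_entropy_def)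
next
  case False
  then have n: "real (card S) > 0" using assms by (simp add: card_gt_0_iff)
  have "(\<Sum>w\<in>S. - log 2 (unif_prob S f (f w))) =
        (\<Sum>v\<in>f ` S. real (card {w\<in>S. f w = v}) * (- log 2 (unif_prob S f v)))"
    by (rule sum_comp_by_fibres[OF assms])
  also have "\<dots> = (\<Sum>v\<in>f ` S. card S * (unif_prob S f v * (- log 2 (unif_prob S f v))))"
    using n by (intro sum.cong) (auto simp: unif_prob_def)
  also have "\<dots> = card S * unif_entropy S f"
    unfolding unif_entropy_def by (simp add: sum_distrib_left)
  finally show ?thesis using n by simp
qed

lemma unif_entropy_cong:
  assumes "\<And>w. w \<in> S \<Longrightarrow> f w = f' w"
  shows "unif_entropy S f = unif_entropy S f'"
proof -
  have "unif_prob S f v = unif_prob S f' v" for v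
    using assms unfolding unif_prob_def by (metis (mono_tags, lifting) Collect_cong)
  moreover have "f ` S = f' ` S" using assms by (auto simp: image_def)
  ultimately show ?thesis unfolding unif_entropy_def by simp
qed

lemma unif_entropy_const:
  assumes "finite S"
  shows "unif_entropy S (\<lambda>w. c) = 0"
  using assms unfolding unif_entropy_eq_mean[OF assms] unif_prob_def
  by (cases "S = {}") (auto simp: card_gt_0_iff)

lemma sum_log_le_log_mean:
  assumes "finite S" "S \<noteq> {}" "\<And>w. w \<in> S \<Longrightarrow> x w > 0"
  shows "(\<Sum>w\<in>S. log 2 (x w)) \<le> card S * log 2 ((\<Sum>w\<in>S. x w) / card S)"
proof -
  define n where "n = real (card S)"
  have n: "n > 0" using assms unfolding n_def by (simp add: card_gt_0_iff)
  define m where "m = (\<Sum>w\<in>S. x w) / n"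
  have "(\<Sum>w\<in>S. x w) > 0" using assms by (intro sum_pos) auto
  then have m: "m > 0" using n unfolding m_def by simp
  have "(\<Sum>w\<in>S. log 2 (x w) - log 2 m) \<le> (\<Sum>w\<in>S. (x w / m - 1) / ln 2)"
  proof (rule sum_mono)
    fix w assume w: "w \<in> S"
    have "log 2 (x w) - log 2 m = ln (x w / m) / ln 2"
      using assms(3)[OF w] m by (simp add: log_def ln_div diff_divide_distrib)
    also have "\<dots> \<le> (x w / m - 1) / ln 2"
      using ln_le_minus_one[of "x w / m"] assms(3)[OF w] m by (simp add: divide_right_mono)
    finally show "log 2 (x w) - log 2 m \<le> (x w / m - 1) / ln 2" .
  qed
  also have "\<dots> = ((\<Sum>w\<in>S. x w) / m - n) / ln 2"
    by (simp add: sum_divide_distrib[symmetric] sum_subtractf n_def)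
  also have "\<dots> = 0" using n m unfolding m_def by (auto simp: field_simps)
  finally have "(\<Sum>w\<in>S. log 2 (x w)) - n * log 2 m \<le> 0"
    by (simp add: sum_subtractf n_def)
  then show ?thesis unfolding m_def n_def by linarith
qed

lemma sum_log_inverse_card_fibres_le:
  fixes c :: real
  assumes "finite S" "S \<noteq> {}" "c > 0"
  shows "(\<Sum>w\<in>S. log 2 (c / card {x\<in>S. f x = f w})) \<le> card S * log 2 (c * card (f ` S) / card S)"
proof -
  have "(\<Sum>w\<in>S. c / card {x\<in>S. f x = f w}) = c * (\<Sum>w\<in>S. 1 / card {x\<in>S. f x = f w})"
    by (simp add: sum_distrib_left)
  then have "(\<Sum>w\<in>S. c / card {x\<in>S. f x = f w}) = c * card (f ` S)"
    using sum_inverse_card_fibres[OF assms(1), of f] by simp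
  then show ?thesis
    using sum_log_le_log_mean[OF assms(1,2), of "\<lambda>w. c / card {x\<in>S. f x = f w}"]
      card_fibre_pos[OF assms(1), of _ f] assms(3) by simp
qed

lemma unif_entropy_le_log_card_image:
  assumes "finite S" "S \<noteq> {}"
  shows "unif_entropy S f \<le> log 2 (card (f ` S))"
proof -
  have n: "real (card S) > 0" using assms by (simp add: card_gt_0_iff)
  have "(\<Sum>w\<in>S. - log 2 (unif_prob S f (f w))) = (\<Sum>w\<in>S. log 2 (card S / card {x\<in>S. f x = f w}))"
    using neg_log_unif_prob[OF assms(1)] by (intro sum.cong) auto
  also have "\<dots> \<le> card S * log 2 (card (f ` S))"
    using sum_log_inverse_card_fibres_le[OF assms n, of f] n by simp
  finally show ?thesis
    unfolding unif_entropy_eq_mean[OF assms(1)] using n by (simp add: divide_le_eq mult.commute)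
qed

lemma unif_entropy_le_of_card_image_le:
  assumes "finite S" "S \<noteq> {}" "real (card (f ` S)) \<le> 2 powr R"
  shows "unif_entropy S f \<le> R"
proof -
  have "real (card (f ` S)) > 0" using assms(1,2) by (simp add: card_gt_0_iff)
  then have "log 2 (card (f ` S)) \<le> log 2 (2 powr R)"
    using assms(3) by (subst log_le_cancel_iff) auto
  then show ?thesis using unif_entropy_le_log_card_image[OF assms(1,2), of f] by simp
qed

lemma unif_entropy_ge_of_unif_prob_le:
  assumes "finite S" "S \<noteq> {}" "\<And>w. w \<in> S \<Longrightarrow> unif_prob S f (f w) \<le> 2 powr (- c)"
  shows "unif_entropy S f \<ge> c"
proof -
  have "(\<Sum>w\<in>S. c) \<le> (\<Sum>w\<in>S. - log 2 (unif_prob S f (f w)))"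
  proof (rule sum_mono)
    fix w assume w: "w \<in> S"
    have "log 2 (unif_prob S f (f w)) \<le> log 2 (2 powr (- c))"
      using assms(3)[OF w] unif_prob_pos[OF assms(1) w] by (subst log_le_cancel_iff) auto
    then show "c \<le> - log 2 (unif_prob S f (f w))" by simp
  qed
  moreover have "real (card S) > 0" using assms by (simp add: card_gt_0_iff)
  ultimately show ?thesis
    unfolding unif_entropy_eq_mean[OF assms(1)] by (simp add: le_divide_eq mult.commute)
qed

lemma unif_entropy_comp_le:
  assumes "finite S"
  shows "unif_entropy S (\<lambda>w. \<phi> (f w)) \<le> unif_entropy S f"
proof -
  have "- log 2 (unif_prob S (\<lambda>w. \<phi> (f w)) (\<phi> (f w))) \<le> - log 2 (unif_prob S f (f w))"
    if w: "w \<in> S" for w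
  proof -
    have "card {x\<in>S. f x = f w} \<le> card {x\<in>S. \<phi> (f x) = \<phi> (f w)}"
      using assms by (intro card_mono) auto
    then have "unif_prob S f (f w) \<le> unif_prob S (\<lambda>w. \<phi> (f w)) (\<phi> (f w))"
      unfolding unif_prob_def by (simp add: divide_right_mono)
    then show ?thesis using unif_prob_pos[OF assms w, of f] by simp
  qed
  then show ?thesis
    unfolding unif_entropy_eq_mean[OF assms] by (intro divide_right_mono sum_mono) auto
qed

lemma sum_card_fibres_product_ratio_le:
  assumes "finite S"
  shows "(\<Sum>w\<in>S. real (card {x\<in>S. f x = f w}) * card {x\<in>S. g x = g w}
                     / card {x\<in>S. (f x, g x) = (f w, g w)}) \<le> card S * card S"
proof -
  define a where "a u = real (card {w\<in>S. f w = u})" for u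
  define b where "b v = real (card {w\<in>S. g w = v})" for v
  define fg where "fg w = (f w, g w)" for w
  have "(\<Sum>w\<in>S. a (f w) * b (g w) / card {x\<in>S. fg x = fg w})
      = (\<Sum>p\<in>fg ` S. real (card {w\<in>S. fg w = p}) * (a (fst p) * b (snd p) / card {x\<in>S. fg x = p}))"
    using sum_comp_by_fibres[OF assms, of "\<lambda>p. a (fst p) * b (snd p) / card {x\<in>S. fg x = p}" fg]
    by (simp add: fg_def)
  also have "\<dots> = (\<Sum>p\<in>fg ` S. a (fst p) * b (snd p))"
  proof (rule sum.cong)
    fix p assume "p \<in> fg ` S"
    then have "card {x\<in>S. fg x = p} > 0" using card_fibre_pos[OF assms, of _ fg] by blast
    then show "real (card {w\<in>S. fg w = p}) * (a (fst p) * b (snd p) / card {x\<in>S. fg x = p})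
             = a (fst p) * b (snd p)" by simp
  qed simp
  also have "\<dots> \<le> (\<Sum>p\<in>f ` S \<times> g ` S. a (fst p) * b (snd p))"
    by (rule sum_mono2) (auto simp: assms a_def b_def fg_def)
  also have "\<dots> = (\<Sum>u\<in>f ` S. a u) * (\<Sum>v\<in>g ` S. b v)"
    by (simp add: sum_product sum.cartesian_product case_prod_beta')
  also have "\<dots> = card S * card S"
    using sum_card_fibres[OF assms, of f] sum_card_fibres[OF assms, of g] by (simp add: a_def b_def)
  finally show ?thesis by (simp add: a_def b_def fg_def)
qed

lemma unif_entropy_pair_le:
  assumes fin: "finite S"
  shows "unif_entropy S (\<lambda>w. (f w, g w)) \<le> unif_entropy S f + unif_entropy S g"
proof (cases "S = {}")
  case True
  then show ?thesis by (simp add: unif_entropy_def)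
next
  case ne: False
  define n where "n = real (card S)"
  have n: "n > 0" using fin ne unfolding n_def by (simp add: card_gt_0_iff)
  define a where "a w = real (card {x\<in>S. f x = f w})" for w
  define b where "b w = real (card {x\<in>S. g x = g w})" for w
  define c where "c w = real (card {x\<in>S. (f x, g x) = (f w, g w)})" for w
  have pos: "a w > 0" "b w > 0" "c w > 0" if "w \<in> S" for w
    using card_fibre_pos[OF fin that] card_fibre_pos[OF fin that, of "\<lambda>w. (f w, g w)"]
    by (auto simp: a_def b_def c_def)
  \<comment> \<open>The joint and marginal information differ by log (a b / (c n)); these ratios have mean
    at most one, so by Jensen their logarithms sum to at most zero.\<close>
  have excess: "(\<Sum>w\<in>S. log 2 (a w * b w / (c w * n))) \<le> 0"
  proof -
    have "(\<Sum>w\<in>S. a w * b w / (c w * n)) = (\<Sum>w\<in>S. a w * b w / c w) / n"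
      by (simp add: sum_divide_distrib)
    also have "\<dots> \<le> n"
      using sum_card_fibres_product_ratio_le[OF fin, of f g] n
      by (simp add: a_def b_def c_def n_def divide_le_eq)
    finally have "(\<Sum>w\<in>S. a w * b w / (c w * n)) / n \<le> 1" using n by simp
    moreover have "(\<Sum>w\<in>S. a w * b w / (c w * n)) > 0"
      using pos fin ne n by (intro sum_pos) auto
    ultimately have "n * log 2 ((\<Sum>w\<in>S. a w * b w / (c w * n)) / n) \<le> 0"
      using n by (simp add: mult_nonneg_nonpos)
    moreover have "(\<Sum>w\<in>S. log 2 (a w * b w / (c w * n)))
        \<le> n * log 2 ((\<Sum>w\<in>S. a w * b w / (c w * n)) / n)"
      unfolding n_def by (rule sum_log_le_log_mean[OF fin ne]) (use pos n in \<open>auto simp: n_def\<close>)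
    ultimately show ?thesis by linarith
  qed
  have "- log 2 (unif_prob S (\<lambda>w. (f w, g w)) (f w, g w)) =
     - log 2 (unif_prob S f (f w)) - log 2 (unif_prob S g (g w)) + log 2 (a w * b w / (c w * n))"
    if "w \<in> S" for w
    using pos[OF that] n by (simp add: unif_prob_def a_def b_def c_def n_def log_divide log_mult)
  then have "(\<Sum>w\<in>S. - log 2 (unif_prob S (\<lambda>w. (f w, g w)) (f w, g w))) =
     (\<Sum>w\<in>S. - log 2 (unif_prob S f (f w))) + (\<Sum>w\<in>S. - log 2 (unif_prob S g (g w)))
     + (\<Sum>w\<in>S. log 2 (a w * b w / (c w * n)))"
    by (simp add: sum.distrib sum_subtractf sum_negf)
  then show ?thesis
    using excess n unfolding unif_entropy_eq_mean[OF fin] n_def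
    by (simp add: add_divide_distrib[symmetric] divide_right_mono)
qed

lemma unif_entropy_restrict_le_sum:
  assumes fin: "finite S" and "finite A"
  shows "unif_entropy S (\<lambda>w. restrict (\<lambda>a. f a w) A) \<le> (\<Sum>a\<in>A. unif_entropy S (f a))"
  using assms(2)
proof (induction A rule: finite_induct)
  case empty
  show ?case using unif_entropy_const[OF fin, of "restrict (\<lambda>a. f a undefined) {}"] by (simp add: restrict_def)
next
  case (insert a A)
  have eqf: "(\<lambda>w. restrict (\<lambda>a. f a w) (insert a A)) =
      (\<lambda>w. (\<lambda>p. (snd p)(a := fst p)) (f a w, restrict (\<lambda>a. f a w) A))"
    by (auto simp: restrict_def fun_eq_iff)
  have "unif_entropy S (\<lambda>w. restrict (\<lambda>a. f a w) (insert a A)) \<le>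
        unif_entropy S (\<lambda>w. (f a w, restrict (\<lambda>a. f a w) A))"
    unfolding eqf by (rule unif_entropy_comp_le[OF fin])
  also have "\<dots> \<le> unif_entropy S (f a) + unif_entropy S (\<lambda>w. restrict (\<lambda>a. f a w) A)"
    using unif_entropy_pair_le[OF fin, of "f a" "\<lambda>w. restrict (\<lambda>a. f a w) A"] by simp
  also have "\<dots> \<le> unif_entropy S (f a) + (\<Sum>a\<in>A. unif_entropy S (f a))"
    using insert.IH by (simp add: restrict_def)
  finally show ?case by (simp only: sum.insert[OF insert.hyps])
qed

lemma neg_mult_log2_le_1:
  assumes "0 \<le> x" "x \<le> (1::real)"
  shows "- x * log 2 x \<le> 1"
proof (cases "x = 0")
  case True
  then show ?thesis by simp
next
  case False
  then have x: "x > 0" using assms by simp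
  have l2: "ln 2 \<ge> (1/2::real)"
    using ln_le_minus_one[of "1/2"] by (simp add: ln_div)
  have "ln (1 / (exp 1 * x)) \<le> 1 / (exp 1 * x) - 1" using x by (intro ln_le_minus_one) simp
  moreover have "ln (1 / (exp 1 * x)) = - 1 - ln x" using x by (simp add: ln_div ln_mult)
  ultimately have "- ln x \<le> 1 / (exp 1 * x)" by simp
  then have "x * (- ln x) \<le> x * (1 / (exp 1 * x))" using x by (intro mult_left_mono) auto
  then have A: "- x * ln x \<le> 1 / exp 1" using x by simp
  have "- x * log 2 x = (- x * ln x) / ln 2" by (simp add: log_def)
  also have "\<dots> \<le> (1 / exp 1) / ln 2" using A l2 by (intro divide_right_mono) auto
  also have "\<dots> \<le> 1"
  proof -
    have "exp 1 \<ge> (2::real)" using exp_ge_add_one_self[of 1] by simp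
    then have "exp 1 * ln 2 \<ge> 2 * (1/2::real)" using l2 by (intro mult_mono) auto
    then show ?thesis using l2 by (simp add: field_simps)
  qed
  finally show ?thesis .
qed

lemma sum_log_ratio_card_fibres_le:
  fixes n :: real
  assumes "finite B" "real (card B) \<le> n" "n > 0"
  shows "(\<Sum>w\<in>B. log 2 (n / card {x\<in>B. U x = U w})) \<le> n + card B * log 2 (card (U ` B))"
proof (cases "B = {}")
  case True
  then show ?thesis using assms by simp
next
  case False
  define k where "k = real (card B)"
  have k: "k > 0" unfolding k_def using assms(1) False by (simp add: card_gt_0_iff)
  have N: "real (card (U ` B)) > 0" using assms(1) False by (simp add: card_gt_0_iff)
  have "(\<Sum>w\<in>B. log 2 (n / card {x\<in>B. U x = U w})) \<le> k * log 2 (n * card (U ` B) / k)"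
    unfolding k_def by (rule sum_log_inverse_card_fibres_le[OF assms(1) False assms(3)])
  also have "\<dots> = k * log 2 (card (U ` B)) + n * (- (k / n) * log 2 (k / n))"
    using k assms(3) N by (simp add: log_divide log_mult algebra_simps)
  also have "\<dots> \<le> k * log 2 (card (U ` B)) + n * 1"
    using neg_mult_log2_le_1[of "k / n"] k assms(2,3) unfolding k_def
    by (intro add_left_mono mult_left_mono) auto
  finally show ?thesis unfolding k_def by simp
qed

text \<open>The Fano step: the variable reveals U exactly on the error event B.\<close>
lemma unif_entropy_error_pattern_le:
  assumes fin: "finite S" and BS: "B \<subseteq> S"
  shows "unif_entropy S (\<lambda>w. if w \<in> B then Some (U w) else None)
           \<le> 2 + (card B / card S) * log 2 (card (U ` B))"
proof (cases "S = {}")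
  case True
  then show ?thesis using BS by (simp add: unif_entropy_def)
next
  case ne: False
  define E where "E w = (if w \<in> B then Some (U w) else None)" for w
  define n where "n = real (card S)"
  have n: "n > 0" using fin ne unfolding n_def by (simp add: card_gt_0_iff)
  have finB: "finite B" using fin BS finite_subset by blast
  have cardB: "real (card B) \<le> n" unfolding n_def using card_mono[OF fin BS] by simp
  have "(\<Sum>w\<in>S - B. - log 2 (unif_prob S E (E w))) \<le> n"
  proof -
    define r where "r = real (card (S - B))"
    have "{x\<in>S. E x = E w} = S - B" if "w \<in> S - B" for w using that unfolding E_def by auto
    then have "(\<Sum>w\<in>S - B. - log 2 (unif_prob S E (E w))) = n * (- (r / n) * log 2 (r / n))"
      using n unfolding unif_prob_def r_def n_def by simp
    also have "\<dots> \<le> n * 1"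
      using neg_mult_log2_le_1[of "r / n"] n card_mono[OF fin, of "S - B"]
      unfolding r_def n_def by (intro mult_left_mono) auto
    finally show ?thesis by simp
  qed
  moreover have "(\<Sum>w\<in>B. - log 2 (unif_prob S E (E w))) \<le> n + card B * log 2 (card (U ` B))"
  proof -
    have "{x\<in>S. E x = E w} = {x\<in>B. U x = U w}" if "w \<in> B" for w
      using that BS unfolding E_def by auto
    then have "(\<Sum>w\<in>B. - log 2 (unif_prob S E (E w))) = (\<Sum>w\<in>B. log 2 (n / card {x\<in>B. U x = U w}))"
      using neg_log_unif_prob[OF fin, of _ E] BS unfolding n_def by (intro sum.cong) auto
    then show ?thesis using sum_log_ratio_card_fibres_le[OF finB cardB n] by simp
  qed
  moreover have "n * (2 + (card B / n) * log 2 (card (U ` B))) = 2 * n + card B * log 2 (card (U ` B))"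
    using n by (simp add: algebra_simps)
  ultimately have "(\<Sum>w\<in>S. - log 2 (unif_prob S E (E w))) \<le> n * (2 + (card B / n) * log 2 (card (U ` B)))"
    using sum.subset_diff[OF BS fin, of "\<lambda>w. - log 2 (unif_prob S E (E w))"] by linarith
  then show ?thesis
    unfolding E_def[symmetric] unif_entropy_eq_mean[OF fin] n_def[symmetric]
    using n by (simp add: divide_le_eq mult.commute)
qed

lemma card_bit_lists: "card {xs :: bool list. length xs = F} = 2 ^ F"
  using card_lists_length_eq[of "UNIV :: bool set" F] by simp

lemma finite_bit_lists: "finite {xs :: bool list. length xs = F}"
  using finite_lists_length_eq[of "UNIV :: bool set" F] by simp

lemma finite_file_tuples: "finite (file_tuples D F)"
  unfolding file_tuples_def by (intro finite_PiE finite_bit_lists) simp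

lemma card_file_tuples: "card (file_tuples D F) = 2 ^ (F * D)"
  unfolding file_tuples_def by (simp add: card_PiE card_bit_lists power_mult)

lemma file_tuples_nonempty: "file_tuples D F \<noteq> {}"
  unfolding file_tuples_def by (simp add: PiE_eq_empty_iff) (metis length_replicate)

lemma unif_prob_restrict_file_tuples_le:
  assumes T: "T \<subseteq> {1..D}" and w: "w \<in> file_tuples D F"
  shows "unif_prob (file_tuples D F) (\<lambda>x. restrict x T) (restrict w T) \<le> 2 powr (- (card T * F))"
proof -
  define L where "L = {xs :: bool list. length xs = F}"
  define P where "P = PiE {1..D} (\<lambda>j. if j \<in> T then {w j} else L)"
  have finT: "finite T" using T finite_subset by blast
  have tD: "card T \<le> D" using card_mono[OF _ T] by simp
  have sub: "{x \<in> file_tuples D F. restrict x T = restrict w T} \<subseteq> P"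
  proof
    fix x assume x: "x \<in> {x \<in> file_tuples D F. restrict x T = restrict w T}"
    then have "x j = w j" if "j \<in> T" for j
      using that by (metis (mono_tags, lifting) mem_Collect_eq restrict_apply')
    then show "x \<in> P" using x unfolding P_def file_tuples_def L_def by (auto simp: PiE_iff)
  qed
  have cP: "card P = (2 ^ F) ^ (D - card T)"
  proof -
    have "card P = (\<Prod>j\<in>{1..D}. if j \<in> T then 1 else 2 ^ F)"
      by (simp add: P_def card_PiE L_def card_bit_lists if_distrib cong: if_cong)
    also have "\<dots> = (2 ^ F) ^ card ({1..D} - T)" by (simp add: prod.If_cases Diff_eq)
    also have "card ({1..D} - T) = D - card T" using T by (simp add: card_Diff_subset finT)
    finally show ?thesis .
  qed
  have "finite P" unfolding P_def by (intro finite_PiE) (auto simp: L_def finite_bit_lists)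
  then have "card {x \<in> file_tuples D F. restrict x T = restrict w T} \<le> (2 ^ F) ^ (D - card T)"
    using card_mono[OF _ sub] cP by simp
  then have "unif_prob (file_tuples D F) (\<lambda>x. restrict x T) (restrict w T)
      \<le> real ((2 ^ F) ^ (D - card T)) / real (card (file_tuples D F))"
    unfolding unif_prob_def by (intro divide_right_mono) (simp only: of_nat_le_iff, simp)
  also have "\<dots> = 1 / (2::real) ^ (F * card T)"
  proof -
    have "(2::real) ^ (F * D) = 2 ^ (F * (D - card T)) * 2 ^ (F * card T)"
      using tD by (simp add: power_add[symmetric] add_mult_distrib2[symmetric])
    then show ?thesis unfolding card_file_tuples by (simp add: power_mult)
  qed
  also have "\<dots> = 2 powr (- (card T * F))"
    by (simp add: powr_minus powr_realpow[symmetric] mult.commute divide_inverse)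
  finally show ?thesis .
qed

lemma unif_entropy_restrict_file_tuples_ge:
  assumes "T \<subseteq> {1..D}"
  shows "card T * F \<le> unif_entropy (file_tuples D F) (\<lambda>w. restrict w T)"
  by (rule unif_entropy_ge_of_unif_prob_le[OF finite_file_tuples file_tuples_nonempty])
    (use unif_prob_restrict_file_tuples_le[OF assms] in simp)

lemma log_card_restrict_file_tuples_le:
  assumes T: "T \<subseteq> {1..D}" and B: "B \<subseteq> file_tuples D F" "B \<noteq> {}"
  shows "log 2 (card ((\<lambda>w. restrict w T) ` B)) \<le> card T * F"
proof -
  define P where "P = PiE T (\<lambda>_. {xs :: bool list. length xs = F})"
  have finT: "finite T" using T finite_subset by blast
  have "(\<lambda>w. restrict w T) ` B \<subseteq> P"
  proof
    fix u assume "u \<in> (\<lambda>w. restrict w T) ` B"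
    then obtain w where "w \<in> file_tuples D F" "u = restrict w T" using B by auto
    then show "u \<in> P" using T unfolding P_def file_tuples_def by (auto simp: PiE_iff)
  qed
  moreover have "finite P" unfolding P_def by (intro finite_PiE finT finite_bit_lists)
  ultimately have "card ((\<lambda>w. restrict w T) ` B) \<le> card P" by (rule card_mono[rotated])
  also have "card P = 2 ^ (F * card T)"
    by (simp add: P_def card_PiE finT card_bit_lists power_mult)
  finally have "real (card ((\<lambda>w. restrict w T) ` B)) \<le> 2 ^ (F * card T)"
    by (metis of_nat_le_iff of_nat_numeral of_nat_power)
  moreover have "card ((\<lambda>w. restrict w T) ` B) > 0"
    using B(2) \<open>finite P\<close> \<open>_ ` B \<subseteq> P\<close> finite_subset card_gt_0_iff by blast
  ultimately have "log 2 (card ((\<lambda>w. restrict w T) ` B)) \<le> log 2 (2 ^ (F * card T))"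
    by (subst log_le_cancel_iff) auto
  then show ?thesis by (simp add: log_pow_cancel mult.commute)
qed

text \<open>The last two summands of the bound are the Fano correction for decoding errors.\<close>
lemma cutset_bound:
  fixes f :: "'i \<Rightarrow> (nat \<Rightarrow> bool list) \<Rightarrow> 'v" and g :: "nat \<Rightarrow> ('i \<Rightarrow> 'v) \<Rightarrow> bool list"
    and c :: "'i \<Rightarrow> real" and eps :: real
  assumes T: "T \<subseteq> {1..D}" and finA: "finite A"
    and Hf: "\<And>a. a \<in> A \<Longrightarrow> unif_entropy (file_tuples D F) (f a) \<le> c a * F"
    and err: "\<And>j. j \<in> T \<Longrightarrow> real (card {w \<in> file_tuples D F. g j (restrict (\<lambda>a. f a w) A) \<noteq> w j})
                 / real (card (file_tuples D F)) < eps"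
  shows "card T * F \<le> (\<Sum>a\<in>A. c a) * F + 2 + card T * eps * (card T * F)"
proof -
  define W where "W = file_tuples D F"
  have finW: "finite W" using finite_file_tuples unfolding W_def .
  have finT: "finite T" using T finite_subset by blast
  define t where "t = real (card T)"
  define \<Phi> where "\<Phi> w = restrict (\<lambda>a. f a w) A" for w
  define Err where "Err j = {w \<in> W. g j (\<Phi> w) \<noteq> w j}" for j
  define B where "B = (\<Union>j\<in>T. Err j)"
  have BW: "B \<subseteq> W" unfolding B_def Err_def by auto
  define q where "q = real (card B) / real (card W)"
  have q: "0 \<le> q" "q \<le> t * eps"
  proof -
    have "card B \<le> (\<Sum>j\<in>T. card (Err j))" unfolding B_def by (rule card_UN_le[OF finT])
    then have "q \<le> (\<Sum>j\<in>T. real (card (Err j)) / real (card W))"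
      unfolding q_def sum_divide_distrib[symmetric]
      by (intro divide_right_mono) (simp only: of_nat_sum[symmetric] of_nat_le_iff, simp)
    also have "\<dots> \<le> (\<Sum>j\<in>T. eps)"
      by (intro sum_mono less_imp_le) (use err in \<open>simp add: Err_def W_def \<Phi>_def\<close>)
    finally show "q \<le> t * eps" unfolding t_def by simp
  qed (simp add: q_def)
  define U where "U w = restrict w T" for w :: "nat \<Rightarrow> bool list"
  define E where "E w = (if w \<in> B then Some (U w) else None)" for w
  \<comment> \<open>Off the error event the decoders reproduce U; on it, E reveals U.\<close>
  define decode where "decode p = (case snd p of None \<Rightarrow> restrict (\<lambda>j. g j (fst p)) T | Some u \<Rightarrow> u)"
    for p :: "('i \<Rightarrow> 'v) \<times> (nat \<Rightarrow> bool list) option"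
  have U_decode: "U w = decode (\<Phi> w, E w)" if "w \<in> W" for w
    using that unfolding decode_def E_def U_def B_def Err_def by (auto simp: restrict_def fun_eq_iff)
  have "t * F \<le> unif_entropy W U"
    using unif_entropy_restrict_file_tuples_ge[OF T, of F] unfolding t_def U_def W_def
    by (simp add: restrict_def)
  also have "unif_entropy W U = unif_entropy W (\<lambda>w. decode (\<Phi> w, E w))"
    by (rule unif_entropy_cong) (use U_decode in auto)
  also have "\<dots> \<le> unif_entropy W (\<lambda>w. (\<Phi> w, E w))" by (rule unif_entropy_comp_le[OF finW])
  also have "\<dots> \<le> unif_entropy W \<Phi> + unif_entropy W E" by (rule unif_entropy_pair_le[OF finW])
  also have "unif_entropy W \<Phi> \<le> (\<Sum>a\<in>A. unif_entropy W (f a))"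
    unfolding \<Phi>_def by (rule unif_entropy_restrict_le_sum[OF finW finA])
  also have "\<dots> \<le> (\<Sum>a\<in>A. c a * F)" by (intro sum_mono) (use Hf in \<open>simp add: W_def\<close>)
  also have "unif_entropy W E \<le> 2 + q * log 2 (card (U ` B))"
    unfolding E_def q_def by (rule unif_entropy_error_pattern_le[OF finW BW])
  also have "q * log 2 (card (U ` B)) \<le> t * eps * (t * F)"
  proof (cases "B = {}")
    case True
    then show ?thesis using q by (simp add: q_def t_def)
  next
    case False
    have "1 \<le> card (U ` B)" using False finW BW finite_subset by (fastforce simp: Suc_le_eq card_gt_0_iff)
    moreover have "log 2 (card (U ` B)) \<le> t * F"
      using log_card_restrict_file_tuples_le[OF T _ False] BW unfolding U_def t_def W_def by simp
    ultimately show ?thesis using q by (intro mult_mono) auto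
  qed
  finally show ?thesis unfolding t_def by (simp add: sum_distrib_right)
qed

lemma finite_users: "finite (users h r)"
  unfolding users_def by (rule finite_subset[of _ "Pow {1..h}"]) auto

lemma le_of_blocklength_bounds:
  fixes t C :: real
  assumes bound: "\<And>eps F0. eps > 0 \<Longrightarrow> \<exists>F::nat. F \<ge> (F0::nat) \<and> t * F \<le> C * F + 2 + t * eps * (t * F)"
  shows "t \<le> C"
proof (rule ccontr)
  assume "\<not> t \<le> C"
  then have d: "t - C > 0" by simp
  define eps where "eps = (t - C) / (2 * (t * t + 1))"
  have "2 * (t * t + 1) > 0" by (simp add: add_pos_nonneg add_nonneg_pos)
  then have eps: "eps > 0" using d unfolding eps_def by (intro divide_pos_pos) auto
  have te: "t * eps * t \<le> (t - C) / 2"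
  proof -
    have "t * eps * t = (t - C) / 2 * (t * t / (t * t + 1))" unfolding eps_def by (simp add: field_simps)
    also have "\<dots> \<le> (t - C) / 2 * 1"
      using d by (intro mult_left_mono) (auto simp: divide_le_eq_1 add_pos_nonneg add_nonneg_pos)
    finally show ?thesis by simp
  qed
  obtain F :: nat where F: "F \<ge> nat \<lceil>4 / (t - C)\<rceil> + 1"
    and ineq: "t * F \<le> C * F + 2 + t * eps * (t * F)"
    using bound[OF eps] by blast
  have "(t - C) * F \<le> 2 + (t * eps * t) * F" using ineq by (simp add: algebra_simps)
  also have "\<dots> \<le> 2 + (t - C) / 2 * F" using te by (intro add_left_mono mult_right_mono) auto
  finally have "(t - C) * F \<le> 4" by simp
  moreover have "real F > 4 / (t - C)" using F by linarith
  then have "(t - C) * F > 4" using d by (simp add: field_simps)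
  ultimately show False by simp
qed

lemma demands_covering_files:
  assumes S: "S \<subseteq> users h r" "card S = s" "0 < s" and sm: "s * m \<le> D"
  shows "\<exists>dm. (\<forall>j<m. dm j \<in> demands h r D) \<and> (\<forall>f\<in>{1..s * m}. \<exists>j<m. \<exists>k\<in>S. dm j k = f)"
proof -
  have "finite S" using S(2,3) card.infinite by fastforce
  then obtain \<sigma> where \<sigma>: "bij_betw \<sigma> {0..<s} S" using ex_bij_betw_nat_finite S(2) by blast
  define \<tau> where "\<tau> = the_inv_into {0..<s} \<sigma>"
  have \<tau>: "\<tau> k < s" if "k \<in> S" for k
    using bij_betw_the_inv_into[OF \<sigma>] that unfolding \<tau>_def bij_betw_def by auto
  have \<tau>\<sigma>: "\<tau> (\<sigma> i) = i" if "i < s" for i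
    using that \<sigma> unfolding \<tau>_def bij_betw_def by (simp add: the_inv_into_f_f)
  have \<sigma>S: "\<sigma> i \<in> S" if "i < s" for i using \<sigma> that unfolding bij_betw_def by auto
  \<comment> \<open>Under demand j, the users of S request the j-th block of s consecutive files.\<close>
  define dm where "dm j = restrict (\<lambda>k. if k \<in> S then j * s + \<tau> k + 1 else 1) (users h r)" for j
  have "dm j \<in> demands h r D" if "j < m" for j
  proof -
    have "j * s + \<tau> k + 1 \<le> D" if "k \<in> S" for k
    proof -
      have "j * s + \<tau> k + 1 \<le> (j + 1) * s" using \<tau>[OF that] by simp
      also have "\<dots> \<le> m * s" using \<open>j < m\<close> by (intro mult_right_mono) auto
      finally show ?thesis using sm by (simp add: mult.commute)
    qed
    moreover have "0 < s * m" using \<open>j < m\<close> S(3) by simp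
    then have "1 \<le> D" using sm by linarith
    ultimately show ?thesis unfolding dm_def demands_def by auto
  qed
  moreover have "\<exists>j<m. \<exists>k\<in>S. dm j k = f" if f: "f \<in> {1..s * m}" for f
  proof (intro exI bexI conjI)
    show "(f - 1) div s < m" using f S(3) by (auto simp: div_less_iff_less_mult mult.commute)
    show "\<sigma> ((f - 1) mod s) \<in> S" using \<sigma>S S(3) by simp
    then show "dm ((f - 1) div s) (\<sigma> ((f - 1) mod s)) = f"
      using f S(1,3) \<tau>\<sigma> unfolding dm_def by auto
  qed
  ultimately show ?thesis by blast
qed

lemma scheme_okD:
  fixes M N R1 R2 eps :: real
  assumes "scheme_ok h r D M N R1 R2 eps F V Z X Y Dec"
  shows scheme_ok_relay_cache: "j \<in> {1..h} \<Longrightarrow> unif_entropy (file_tuples D F) (V j) \<le> N * F"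
    and scheme_ok_user_cache: "k \<in> users h r \<Longrightarrow> unif_entropy (file_tuples D F) (Z k) \<le> M * F"
    and scheme_ok_server_signal: "\<lbrakk>d \<in> demands h r D; i \<in> {1..h}\<rbrakk>
      \<Longrightarrow> unif_entropy (file_tuples D F) (X i d) \<le> R1 * F"
    and scheme_ok_relay_signal: "\<lbrakk>d \<in> demands h r D; k \<in> users h r; i \<in> k\<rbrakk>
      \<Longrightarrow> unif_entropy (file_tuples D F) (\<lambda>w. Y i d k (X i d w) (V i w)) \<le> R2 * F"
    and scheme_ok_error: "\<lbrakk>d \<in> demands h r D; k \<in> users h r\<rbrakk> \<Longrightarrow>
      real (card {w \<in> file_tuples D F.
        Dec k d (Z k w) (\<lambda>i. if i \<in> k then Y i d k (X i d w) (V i w) else 0) \<noteq> w (d k)})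
      / real (card (file_tuples D F)) < eps"
proof -
  note ok = assms[unfolded scheme_ok_def Let_def]
  note entropy_le = unif_entropy_le_of_card_image_le[OF finite_file_tuples file_tuples_nonempty]
  show "j \<in> {1..h} \<Longrightarrow> unif_entropy (file_tuples D F) (V j) \<le> N * F"
    using ok by blast
  show "k \<in> users h r \<Longrightarrow> unif_entropy (file_tuples D F) (Z k) \<le> M * F"
    using ok by blast
  show "unif_entropy (file_tuples D F) (X i d) \<le> R1 * F" if "d \<in> demands h r D" "i \<in> {1..h}"
    using ok that by (intro entropy_le) blast
  show "unif_entropy (file_tuples D F) (\<lambda>w. Y i d k (X i d w) (V i w)) \<le> R2 * F"
    if "d \<in> demands h r D" "k \<in> users h r" "i \<in> k"
  proof (rule entropy_le)
    have "i \<in> {1..h}" using that(2,3) unfolding users_def by blast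
    then show "real (card ((\<lambda>w. Y i d k (X i d w) (V i w)) ` file_tuples D F)) \<le> 2 powr (R2 * F)"
      using ok that by blast
  qed
  show "\<lbrakk>d \<in> demands h r D; k \<in> users h r\<rbrakk> \<Longrightarrow>
      real (card {w \<in> file_tuples D F.
        Dec k d (Z k w) (\<lambda>i. if i \<in> k then Y i d k (X i d w) (V i w) else 0) \<noteq> w (d k)})
      / real (card (file_tuples D F)) < eps"
    using ok by blast
qed

text \<open>The cut: the decoders of the users in S only see their caches, the caches of the relays
  in L and the server signals to these relays.\<close>
lemma scheme_cutset_bound_R1:
  fixes M N R1 R2 eps :: real and m :: nat
  assumes sch: "scheme_ok h r D M N R1 R2 eps F V Z X Y Dec"
    and L: "L \<subseteq> {1..h}" and S: "S \<subseteq> users h r" "\<And>k. k \<in> S \<Longrightarrow> k \<subseteq> L"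
    and dm: "\<And>j. j < m \<Longrightarrow> dm j \<in> demands h r D"
    and T: "T \<subseteq> {1..D}" "\<And>f. f \<in> T \<Longrightarrow> \<exists>j<m. \<exists>k\<in>S. dm j k = f"
  shows "card T * F \<le> (card S * M + card L * N + card L * m * R1) * F + 2 + card T * eps * (card T * F)"
proof -
  have finS: "finite S" using S(1) finite_users by (rule finite_subset)
  have finL: "finite L" using L finite_subset by blast
  obtain jf kf where jk: "\<And>f. f \<in> T \<Longrightarrow> jf f < m \<and> kf f \<in> S \<and> dm (jf f) (kf f) = f"
    using T(2) by metis
  define A :: "(nat set + nat + nat \<times> nat) set"
    where "A = Inl ` S \<union> Inr ` (Inl ` L \<union> Inr ` (L \<times> {..<m}))"
  define var :: "nat set + nat + nat \<times> nat \<Rightarrow> (nat \<Rightarrow> bool list) \<Rightarrow> nat"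
    where "var = case_sum Z (case_sum V (\<lambda>(i, j). X i (dm j)))"
  define rate :: "nat set + nat + nat \<times> nat \<Rightarrow> real"
    where "rate = case_sum (\<lambda>_. M) (case_sum (\<lambda>_. N) (\<lambda>_. R1))"
  define g where "g f P = Dec (kf f) (dm (jf f)) (P (Inl (kf f)))
    (\<lambda>i. if i \<in> kf f then Y i (dm (jf f)) (kf f) (P (Inr (Inr (i, jf f)))) (P (Inr (Inl i))) else 0)"
    for f P
  have "(\<Sum>a\<in>A. rate a) = (\<Sum>a\<in>Inl ` S. rate a) + (\<Sum>a\<in>Inr ` Inl ` L. rate a)
      + (\<Sum>a\<in>Inr ` Inr ` (L \<times> {..<m}). rate a)"
    unfolding A_def image_Un using finS finL by (subst sum.union_disjoint; auto)+
  also have "\<dots> = card S * M + card L * N + card L * m * R1"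
    unfolding rate_def by (simp add: sum.reindex card_cartesian_product)
  finally have "(\<Sum>a\<in>A. rate a) = card S * M + card L * N + card L * m * R1" .
  moreover have "card T * F \<le> (\<Sum>a\<in>A. rate a) * F + 2 + card T * eps * (card T * F)"
  proof (rule cutset_bound[OF T(1)])
    show "finite A" unfolding A_def using finS finL by auto
  next
    fix a assume "a \<in> A"
    then show "unif_entropy (file_tuples D F) (var a) \<le> rate a * F"
      using scheme_ok_user_cache[OF sch] scheme_ok_relay_cache[OF sch]
        scheme_ok_server_signal[OF sch dm] S L
      unfolding A_def var_def rate_def by auto
  next
    fix f assume f: "f \<in> T"
    define k where "k = kf f"
    define d where "d = dm (jf f)"
    have k: "k \<in> S" "k \<subseteq> L" and dk: "d k = f" and d: "d \<in> demands h r D"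
      using jk[OF f] S(2) dm unfolding k_def d_def by auto
    have "g f (restrict (\<lambda>a. var a w) A) =
          Dec k d (Z k w) (\<lambda>i. if i \<in> k then Y i d k (X i d w) (V i w) else 0)" for w
    proof -
      have "restrict (\<lambda>a. var a w) A (Inl k) = Z k w" using k unfolding A_def var_def by simp
      moreover have "restrict (\<lambda>a. var a w) A (Inr (Inr (i, jf f))) = X i d w"
        and "restrict (\<lambda>a. var a w) A (Inr (Inl i)) = V i w" if "i \<in> k" for i
        using that k jk[OF f] unfolding A_def var_def d_def by auto
      ultimately show ?thesis unfolding g_def k_def[symmetric] d_def[symmetric]
        by (intro arg_cong2[where f = "Dec k d"]) auto
    qed
    then show "real (card {w \<in> file_tuples D F. g f (restrict (\<lambda>a. var a w) A) \<noteq> w f})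
        / real (card (file_tuples D F)) < eps"
      using scheme_ok_error[OF sch d] k S(1) dk by auto
  qed
  ultimately show ?thesis by simp
qed

text \<open>The cut: user k only sees its cache and the signals of its r relays.\<close>
lemma scheme_cutset_bound_R2:
  fixes M N R1 R2 eps :: real and m :: nat
  assumes sch: "scheme_ok h r D M N R1 R2 eps F V Z X Y Dec"
    and k: "k \<in> users h r"
    and dm: "\<And>j. j < m \<Longrightarrow> dm j \<in> demands h r D"
    and T: "T \<subseteq> {1..D}" "\<And>f. f \<in> T \<Longrightarrow> \<exists>j<m. dm j k = f"
  shows "card T * F \<le> (M + r * m * R2) * F + 2 + card T * eps * (card T * F)"
proof -
  have ck: "card k = r" and fink: "finite k"
    using k unfolding users_def by (auto intro: finite_subset)
  obtain jf where jf: "\<And>f. f \<in> T \<Longrightarrow> jf f < m \<and> dm (jf f) k = f"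
    using T(2) by metis
  define A :: "(nat \<times> nat) option set" where "A = insert None (Some ` (k \<times> {..<m}))"
  define var :: "(nat \<times> nat) option \<Rightarrow> (nat \<Rightarrow> bool list) \<Rightarrow> nat"
    where "var = case_option (Z k) (\<lambda>(i, j) w. Y i (dm j) k (X i (dm j) w) (V i w))"
  define rate :: "(nat \<times> nat) option \<Rightarrow> real" where "rate = case_option M (\<lambda>_. R2)"
  define g where "g f P = Dec k (dm (jf f)) (P None) (\<lambda>i. if i \<in> k then P (Some (i, jf f)) else 0)"
    for f P
  have "(\<Sum>a\<in>A. rate a) = M + r * m * R2"
    unfolding A_def rate_def using fink ck by (simp add: sum.reindex card_cartesian_product)
  moreover have "card T * F \<le> (\<Sum>a\<in>A. rate a) * F + 2 + card T * eps * (card T * F)"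
  proof (rule cutset_bound[OF T(1)])
    show "finite A" unfolding A_def using fink by auto
  next
    fix a assume "a \<in> A"
    then show "unif_entropy (file_tuples D F) (var a) \<le> rate a * F"
      using scheme_ok_user_cache[OF sch k] scheme_ok_relay_signal[OF sch dm k]
      unfolding A_def var_def rate_def by auto
  next
    fix f assume f: "f \<in> T"
    define d where "d = dm (jf f)"
    have d: "d \<in> demands h r D" "d k = f" using jf[OF f] dm unfolding d_def by auto
    have "g f (restrict (\<lambda>a. var a w) A) =
          Dec k d (Z k w) (\<lambda>i. if i \<in> k then Y i d k (X i d w) (V i w) else 0)" for w
    proof -
      have "restrict (\<lambda>a. var a w) A (Some (i, jf f)) = Y i d k (X i d w) (V i w)" if "i \<in> k" for i
        using that jf[OF f] unfolding A_def var_def d_def by auto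
      then show ?thesis unfolding g_def d_def[symmetric] A_def[symmetric]
        by (intro arg_cong2[where f = "Dec k d"]) (auto simp: A_def var_def)
    qed
    then show "real (card {w \<in> file_tuples D F. g f (restrict (\<lambda>a. var a w) A) \<noteq> w f})
        / real (card (file_tuples D F)) < eps"
      using scheme_ok_error[OF sch d(1) k] d(2) by auto
  qed
  ultimately show ?thesis by simp
qed

lemma achievable_obtain_scheme:
  assumes "achievable h r D M N R1 R2" "eps > 0"
  obtains F V Z X Y Dec where "F \<ge> F0" "scheme_ok h r D M N R1 R2 eps F V Z X Y Dec"
proof -
  obtain F1 where "\<forall>F\<ge>F1. \<exists>V Z X Y Dec. scheme_ok h r D M N R1 R2 eps F V Z X Y Dec"
    using assms unfolding achievable_def by blast
  then have "\<exists>V Z X Y Dec. scheme_ok h r D M N R1 R2 eps (max F0 F1) V Z X Y Dec" by simp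
  then show ?thesis using that[of "max F0 F1"] by auto
qed

lemma achievable_cutset_R1:
  fixes M N R1 R2 :: real
  assumes ach: "achievable h r D M N R1 R2"
    and L: "L \<subseteq> {1..h}" and S: "S \<subseteq> users h r" "\<And>k. k \<in> S \<Longrightarrow> k \<subseteq> L"
    and s: "card S = s" "0 < s" and sm: "s * m \<le> D"
  shows "s * m \<le> s * M + card L * N + card L * m * R1"
proof -
  obtain dm where dm: "\<And>j. j < m \<Longrightarrow> dm j \<in> demands h r D"
    and cover: "\<And>f. f \<in> {1..s * m} \<Longrightarrow> \<exists>j<m. \<exists>k\<in>S. dm j k = f"
    using demands_covering_files[OF S(1) s sm] by blast
  have "real (s * m) \<le> s * M + card L * N + card L * m * R1"
  proof (rule le_of_blocklength_bounds)
    fix eps :: real and F0 :: nat assume "eps > 0"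
    with ach obtain F V Z X Y Dec where F: "F \<ge> F0"
      and sch: "scheme_ok h r D M N R1 R2 eps F V Z X Y Dec" by (rule achievable_obtain_scheme)
    have "card {1..s * m} * F \<le> (card S * M + card L * N + card L * m * R1) * F + 2
        + card {1..s * m} * eps * (card {1..s * m} * F)"
      by (rule scheme_cutset_bound_R1[OF sch L S dm _ cover]) (use sm in auto)
    then show "\<exists>F::nat. F \<ge> F0 \<and> real (s * m) * F
        \<le> (s * M + card L * N + card L * m * R1) * F + 2 + real (s * m) * eps * (real (s * m) * F)"
      using F s(1) by auto
  qed
  then show ?thesis by simp
qed

lemma achievable_cutset_R2:
  fixes M N R1 R2 :: real
  assumes ach: "achievable h r D M N R1 R2" and "r \<le> h"
  shows "D \<le> M + r * D * R2"
proof -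
  define k where "k = {1..r}"
  have k: "k \<in> users h r" unfolding k_def users_def using assms(2) by auto
  obtain dm where dm: "\<And>j. j < D \<Longrightarrow> dm j \<in> demands h r D"
    and cover: "\<And>f. f \<in> {1..D} \<Longrightarrow> \<exists>j<D. dm j k = f"
    using demands_covering_files[of "{k}" h r 1 D D] k by (auto simp del: atLeastAtMost_iff)
  have "real D \<le> M + r * D * R2"
  proof (rule le_of_blocklength_bounds)
    fix eps :: real and F0 :: nat assume "eps > 0"
    with ach obtain F V Z X Y Dec where F: "F \<ge> F0"
      and sch: "scheme_ok h r D M N R1 R2 eps F V Z X Y Dec" by (rule achievable_obtain_scheme)
    have "card {1..D} * F \<le> (M + r * D * R2) * F + 2 + card {1..D} * eps * (card {1..D} * F)"
      by (rule scheme_cutset_bound_R2[OF sch k dm _ cover]) auto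
    then show "\<exists>F::nat. F \<ge> F0 \<and> real D * F
        \<le> (M + r * D * R2) * F + 2 + real D * eps * (real D * F)"
      using F by auto
  qed
  then show ?thesis by simp
qed

lemma achievable_R1_lower_bound:
  fixes M N R1 R2 :: real
  assumes ach: "achievable h r D M N R1 R2"
    and l: "1 \<le> l" "l \<le> h" and s: "1 \<le> s" "s \<le> D" "s \<le> l choose r"
  shows "1 / real l * (real s - (real s * M + real l * N) / real (D div s)) \<le> R1"
proof -
  have "card {K. K \<subseteq> {1..l} \<and> card K = r} = l choose r" by (simp add: n_subsets)
  then obtain S where S: "S \<subseteq> {K. K \<subseteq> {1..l} \<and> card K = r}" "card S = s"
    using obtain_subset_with_card_n[of s "{K. K \<subseteq> {1..l} \<and> card K = r}"] s(3) by auto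
  have "{1..l} \<subseteq> {1..h}" using l by auto
  moreover have "S \<subseteq> users h r" using S(1) \<open>{1..l} \<subseteq> {1..h}\<close> unfolding users_def by blast
  moreover have "\<And>k. k \<in> S \<Longrightarrow> k \<subseteq> {1..l}" using S(1) by blast
  moreover have "s * (D div s) \<le> D" by simp
  ultimately have "s * (D div s) \<le> s * M + l * N + l * (D div s) * R1"
    using achievable_cutset_R1[OF ach, of "{1..l}" S s "D div s"] S(2) s by simp
  moreover have pos: "real l > 0" "real (D div s) > 0" using l s by (auto simp: div_greater_zero_iff)
  ultimately have "(real s * real (D div s) - (s * M + l * N)) / (real l * real (D div s)) \<le> R1"
    by (simp add: divide_le_eq mult.commute)
  moreover have "1 / real l * (real s - (real s * M + real l * N) / real (D div s))
      = (real s * real (D div s) - (s * M + l * N)) / (real l * real (D div s))"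
    using pos by (simp add: field_simps)
  ultimately show ?thesis by simp
qed

lemma le_choose_add_minus_one:
  assumes "1 \<le> r"
  shows "x \<le> (x + r - 1) choose r"
proof -
  consider "x = 0" | "x = 1" | "2 \<le> x" by linarith
  then show ?thesis
  proof cases
    case 3
    then have "x + r - 1 \<le> (x + r - 1) choose r" using assms by (intro upper_le_binomial) auto
    then show ?thesis using assms by linarith
  qed simp_all
qed

theorem theorem2:
  fixes h r D :: nat and M N R1 R2 :: real
  assumes "1 \<le> r" and "r < h" and "h choose r \<le> D"
    and "0 \<le> M" and "0 \<le> N"
    and "0 < M + real r * N" and "M + real r * N \<le> real D"
    and "achievable h r D M N R1 R2"
  shows "(\<forall>l \<in> {r..h}. \<forall>s \<in> {1..min D (l choose r)}.
            R1 \<ge> (1 / real l) * (real s - (real s * M + real l * N) / real (D div s)))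
       \<and> (\<forall>x \<in> {1..min D (h choose r)}.
            let u = min (x + r - 1) h in
            R1 \<ge> (1 / real u) * (real x - (real x * M + real u * N) / real (D div x)))
       \<and> R2 \<ge> (1 / real r) * (1 - M / real D)"
proof (intro conjI ballI)
  note ach = \<open>achievable h r D M N R1 R2\<close>
  show "R1 \<ge> (1 / real l) * (real s - (real s * M + real l * N) / real (D div s))"
    if "l \<in> {r..h}" "s \<in> {1..min D (l choose r)}" for l s
    using achievable_R1_lower_bound[OF ach] that \<open>1 \<le> r\<close> by auto
  show "let u = min (x + r - 1) h in
      R1 \<ge> (1 / real u) * (real x - (real x * M + real u * N) / real (D div x))"
    if x: "x \<in> {1..min D (h choose r)}" for x
  proof -
    have "x \<le> min (x + r - 1) h choose r"
      using le_choose_add_minus_one[OF \<open>1 \<le> r\<close>, of x] x by (auto simp: min_def split: if_splits)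
    then show ?thesis
      using achievable_R1_lower_bound[OF ach, of "min (x + r - 1) h" x] x \<open>1 \<le> r\<close> \<open>r < h\<close>
      unfolding Let_def by auto
  qed
  have "0 < h choose r" using \<open>r < h\<close> by simp
  then have "real D > 0" using \<open>h choose r \<le> D\<close> by linarith
  moreover have "real D \<le> M + r * D * R2" using achievable_cutset_R2[OF ach] \<open>r < h\<close> by simp
  ultimately show "R2 \<ge> (1 / real r) * (1 - M / real D)"
    using \<open>1 \<le> r\<close> by (simp add: field_simps)
qed

end
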